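(* Let $n>5$ and let $R$ be either of the complex Lie algebras $R(g^1_{(n,1)},2)$ ($n$ odd) or $R(g^2_{(n,1)},2)$ defined in the context. Then the second adjoint cohomology group vanishes: $H^2(R,R)=\{0\}$.
   Context: $R(g^1_{(n,1)},2)$ ($n$ odd): Lie algebra with basis $\{e_1,\dots,e_n,x,y\}$ and nonzero brackets (plus antisymmetric counterparts) $[e_1,e_i]=e_{i+1}$ ($2\le i\le n-2$), $[e_i,e_{n-i}]=(-1)^ie_n$ ($2\le i\le\frac{n-1}{2}$), $[e_1,x]=e_1$, $[e_i,x]=(i-2)e_i$ ($2\le i\le n-1$), $[e_n,x]=(n-4)e_n$, $[e_i,y]=e_i$ ($2\le i\le n-1$), $[e_n,y]=2e_n$. $R(g^2_{(n,1)},2)$: Lie algebra with basis $\{e_1,\dots,e_n,x,y\}$ and nonzero brackets (plus antisymmetric counterparts) $[e_1,e_i]=e_{i+1}$ ($2\le i\le n-2$), $[e_i,e_n]=e_{i+2}$ ($2\le i\le n-3$), $[e_1,x]=e_1$, $[e_i,x]=(i-2)e_i$ ($2\le i\le n-1$), $[e_n,x]=2e_n$, $[e_i,y]=e_i$ ($2\le i\le n-1$). $H^2(R,R)$ denotes the second Chevalley–Eilenberg cohomology of the Lie algebra $R$ with coefficients in the adjoint module. *)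

theory Defs
  imports Complex_Main
begin

text \<open>Finite-dimensional complex vector spaces are modelled as functions
  nat \<Rightarrow> complex supported on a finite index set I; the basis vector
  with index k is ev k.  A Lie bracket is given by its values on basis
  pairs and extended bilinearly.\<close>

type_synonym vec = "nat \<Rightarrow> complex"

definition vsp :: "nat set \<Rightarrow> vec set" where
  "vsp I = {v. \<forall>i. i \<notin> I \<longrightarrow> v i = 0}"

definition vadd :: "vec \<Rightarrow> vec \<Rightarrow> vec" where
  "vadd u v = (\<lambda>m. u m + v m)"

definition vsub :: "vec \<Rightarrow> vec \<Rightarrow> vec" where
  "vsub u v = (\<lambda>m. u m - v m)"

definition smul :: "complex \<Rightarrow> vec \<Rightarrow> vec" where
  "smul c v = (\<lambda>m. c * v m)"

definition vzero :: vec where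
  "vzero = (\<lambda>m. 0)"

definition ev :: "nat \<Rightarrow> vec" where
  "ev k = (\<lambda>m. if m = k then 1 else 0)"

definition bil_ext :: "nat set \<Rightarrow> (nat \<Rightarrow> nat \<Rightarrow> vec) \<Rightarrow> vec \<Rightarrow> vec \<Rightarrow> vec" where
  "bil_ext I b x y = (\<lambda>m. \<Sum>i\<in>I. \<Sum>j\<in>I. x i * y j * b i j m)"

definition lin_on :: "nat set \<Rightarrow> (vec \<Rightarrow> vec) \<Rightarrow> bool" where
  "lin_on I f \<longleftrightarrow> (\<forall>x\<in>vsp I. f x \<in> vsp I) \<and>
     (\<forall>x\<in>vsp I. \<forall>y\<in>vsp I. f (vadd x y) = vadd (f x) (f y)) \<and>
     (\<forall>c. \<forall>x\<in>vsp I. f (smul c x) = smul c (f x))"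

definition cochain2 :: "nat set \<Rightarrow> (vec \<Rightarrow> vec \<Rightarrow> vec) \<Rightarrow> bool" where
  "cochain2 I \<phi> \<longleftrightarrow> (\<forall>y\<in>vsp I. lin_on I (\<lambda>x. \<phi> x y)) \<and>
     (\<forall>x\<in>vsp I. lin_on I (\<lambda>y. \<phi> x y)) \<and>
     (\<forall>x\<in>vsp I. \<phi> x x = vzero)"

definition d2 :: "(vec \<Rightarrow> vec \<Rightarrow> vec) \<Rightarrow> (vec \<Rightarrow> vec \<Rightarrow> vec) \<Rightarrow> vec \<Rightarrow> vec \<Rightarrow> vec \<Rightarrow> vec" where
  "d2 br \<phi> x y z = (\<lambda>m.
       br x (\<phi> y z) m - br y (\<phi> x z) m + br z (\<phi> x y) m
     - \<phi> (br x y) z m + \<phi> (br x z) y m - \<phi> (br y z) x m)"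

definition d1 :: "(vec \<Rightarrow> vec \<Rightarrow> vec) \<Rightarrow> (vec \<Rightarrow> vec) \<Rightarrow> vec \<Rightarrow> vec \<Rightarrow> vec" where
  "d1 br f x y = vsub (vsub (br x (f y)) (br y (f x))) (f (br x y))"

definition H2_adj_zero :: "nat set \<Rightarrow> (vec \<Rightarrow> vec \<Rightarrow> vec) \<Rightarrow> bool" where
  "H2_adj_zero I br \<longleftrightarrow>
     (\<forall>\<phi>. cochain2 I \<phi> \<and> (\<forall>x\<in>vsp I. \<forall>y\<in>vsp I. \<forall>z\<in>vsp I. d2 br \<phi> x y z = vzero)
        \<longrightarrow> (\<exists>f. lin_on I f \<and> (\<forall>x\<in>vsp I. \<forall>y\<in>vsp I. \<phi> x y = d1 br f x y)))"

text \<open>Basis indexing: e_i \<mapsto> i (1 \<le> i \<le> n), x \<mapsto> n+1, y \<mapsto> n+2.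
  The tables list the given nonzero brackets; the bracket on basis pairs is
  their antisymmetrization.\<close>

definition tab1 :: "nat \<Rightarrow> nat \<Rightarrow> nat \<Rightarrow> vec" where
  "tab1 n i j =
    (if i = 1 \<and> 2 \<le> j \<and> j \<le> n - 2 then ev (j + 1)
     else if 2 \<le> i \<and> i \<le> (n - 1) div 2 \<and> j = n - i then smul ((-1) ^ i) (ev n)
     else if j = n + 1 then
       (if i = 1 then ev 1
        else if 2 \<le> i \<and> i \<le> n - 1 then smul (of_int (int i - 2)) (ev i)
        else if i = n then smul (of_int (int n - 4)) (ev n)
        else vzero)
     else if j = n + 2 then
       (if 2 \<le> i \<and> i \<le> n - 1 then ev i
        else if i = n then smul 2 (ev n)
        else vzero)
     else vzero)"

definition tab2 :: "nat \<Rightarrow> nat \<Rightarrow> nat \<Rightarrow> vec" where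
  "tab2 n i j =
    (if i = 1 \<and> 2 \<le> j \<and> j \<le> n - 2 then ev (j + 1)
     else if 2 \<le> i \<and> i \<le> n - 3 \<and> j = n then ev (i + 2)
     else if j = n + 1 then
       (if i = 1 then ev 1
        else if 2 \<le> i \<and> i \<le> n - 1 then smul (of_int (int i - 2)) (ev i)
        else if i = n then smul 2 (ev n)
        else vzero)
     else if j = n + 2 then
       (if 2 \<le> i \<and> i \<le> n - 1 then ev i else vzero)
     else vzero)"

definition antisym_tab :: "(nat \<Rightarrow> nat \<Rightarrow> vec) \<Rightarrow> nat \<Rightarrow> nat \<Rightarrow> vec" where
  "antisym_tab T i j = vsub (T i j) (T j i)"

definition idxR :: "nat \<Rightarrow> nat set" where
  "idxR n = {1..n + 2}"

definition brR1 :: "nat \<Rightarrow> vec \<Rightarrow> vec \<Rightarrow> vec" where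
  "brR1 n = bil_ext (idxR n) (antisym_tab (tab1 n))"

definition brR2 :: "nat \<Rightarrow> vec \<Rightarrow> vec \<Rightarrow> vec" where
  "brR2 n = bil_ext (idxR n) (antisym_tab (tab2 n))"

end

theory Submission
  imports Defs
begin

text \<open>Both algebras contain the torus spanned by \<open>x\<close> and \<open>y\<close>,
  acting diagonally on the nilradical with pairwise distinct weights. Cartan's homotopy formula
  for \<open>x\<close> and \<open>y\<close> shows that every cocycle is cohomologous to its weight-zero part, and on the
  torus directions this part is a coboundary because the torus is maximal (every diagonal
  derivation of the nilradical is a combination of the two weights). What remains are the
  weight-zero brackets inside the nilradical, \<open>[e\<^sub>1, e\<^sub>k]\<close> together with \<open>[e\<^sub>k, e\<^sub>n\<^sub>-\<^sub>k]\<close>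
  resp. \<open>[e\<^sub>k, e\<^sub>n]\<close>; there one cocycle identity per \<open>k\<close> yields a recursion that is solved by
  an explicit diagonal derivation.\<close>

section \<open>Cochains in coordinates\<close>

lemma sum_eq_term:
  assumes "finite I" "j \<in> I" "\<And>k. k \<in> I \<Longrightarrow> k \<noteq> j \<Longrightarrow> f k = 0"
  shows "sum f I = f j"
  using sum.mono_neutral_right[of I "{j}" f] assms by auto

lemma ev_in_vsp: "i \<in> I \<Longrightarrow> ev i \<in> vsp I"
  by (simp add: ev_def vsp_def)

lemma lin_on_vzero:
  assumes "lin_on I f"
  shows "f vzero = vzero"
proof -
  have "vzero \<in> vsp I" by (simp add: vsp_def vzero_def)
  hence "f (smul 0 vzero) = smul 0 (f vzero)" using assms by (simp add: lin_on_def)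
  moreover have "smul 0 vzero = vzero" by (simp add: smul_def vzero_def)
  ultimately show ?thesis by (simp add: smul_def vzero_def)
qed

lemma lin_on_expand_subset:
  assumes lin: "lin_on I f" and "finite J" "J \<subseteq> I" "\<forall>i. i \<notin> J \<longrightarrow> x i = 0"
  shows "f x = (\<lambda>m. \<Sum>i\<in>J. x i * f (ev i) m)"
  using assms(2-)
proof (induction J arbitrary: x rule: finite_induct)
  case empty
  hence "x = vzero" by (auto simp: vzero_def)
  thus ?case using lin_on_vzero[OF lin] by (simp add: vzero_def)
next
  case (insert a J)
  define x' where "x' = x(a := 0)"
  have aI: "a \<in> I" using insert by auto
  have "smul (x a) (ev a) \<in> vsp I" using aI by (simp add: vsp_def smul_def ev_def)
  moreover have "x' \<in> vsp I" using insert by (auto simp: vsp_def x'_def)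
  moreover have "x = vadd (smul (x a) (ev a)) x'" by (auto simp: x'_def vadd_def smul_def ev_def)
  ultimately have "f x = vadd (f (smul (x a) (ev a))) (f x')"
    using lin by (metis lin_on_def)
  also have "f (smul (x a) (ev a)) = smul (x a) (f (ev a))"
    using lin ev_in_vsp[OF aI] by (simp add: lin_on_def)
  finally have "f x = vadd (smul (x a) (f (ev a))) (f x')" .
  moreover have "f x' = (\<lambda>m. \<Sum>i\<in>J. x i * f (ev i) m)"
    using insert by (auto simp: x'_def intro!: sum.cong)
  ultimately show ?case using insert by (simp add: vadd_def smul_def)
qed

lemma lin_on_expand:
  assumes "lin_on I f" "finite I" "x \<in> vsp I"
  shows "f x m = (\<Sum>i\<in>I. x i * f (ev i) m)"
  using lin_on_expand_subset[OF assms(1,2) order_refl] assms(3) by (simp add: vsp_def)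

lemma lin_on_matrix:
  assumes "\<And>a m. m \<notin> I \<Longrightarrow> F a m = 0"
  shows "lin_on I (\<lambda>v m. \<Sum>a\<in>I. v a * F a m)"
  using assms
  by (auto simp: lin_on_def vsp_def vadd_def smul_def fun_eq_iff distrib_right sum.distrib
      sum_distrib_left mult.assoc)

lemma cochain2_expand:
  assumes c: "cochain2 I \<phi>" and fin: "finite I" and x: "x \<in> vsp I" and y: "y \<in> vsp I"
  shows "\<phi> x y m = (\<Sum>i\<in>I. \<Sum>j\<in>I. x i * y j * \<phi> (ev i) (ev j) m)"
proof -
  have "\<phi> x y m = (\<Sum>i\<in>I. x i * \<phi> (ev i) y m)"
    using lin_on_expand[of I "\<lambda>x. \<phi> x y", OF _ fin x] c y by (simp add: cochain2_def)
  also have "\<dots> = (\<Sum>i\<in>I. x i * (\<Sum>j\<in>I. y j * \<phi> (ev i) (ev j) m))"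
    using lin_on_expand[of I "\<phi> (ev _)", OF _ fin y] c ev_in_vsp
    by (intro sum.cong) (auto simp: cochain2_def)
  finally show ?thesis by (simp add: sum_distrib_left mult.assoc)
qed

lemma cochain2_in_vsp:
  assumes "cochain2 I \<phi>" "x \<in> vsp I" "y \<in> vsp I" "m \<notin> I"
  shows "\<phi> x y m = 0"
  using assms by (auto simp: cochain2_def lin_on_def vsp_def)

lemma cochain2_antisym:
  assumes c: "cochain2 I \<phi>" and a: "a \<in> vsp I" and b: "b \<in> vsp I"
  shows "\<phi> a b m = - \<phi> b a m"
proof -
  have s: "vadd a b \<in> vsp I" using a b by (simp add: vsp_def vadd_def)
  have "vzero = \<phi> (vadd a b) (vadd a b)" using c s by (simp add: cochain2_def)
  also have "\<dots> = vadd (\<phi> a (vadd a b)) (\<phi> b (vadd a b))"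
    using c a b s unfolding cochain2_def lin_on_def by blast
  also have "\<dots> = vadd (vadd (\<phi> a a) (\<phi> a b)) (vadd (\<phi> b a) (\<phi> b b))"
    using c a b by (simp add: cochain2_def lin_on_def)
  finally have "0 = \<phi> a a m + \<phi> a b m + (\<phi> b a m + \<phi> b b m)"
    by (simp add: vadd_def vzero_def fun_eq_iff)
  moreover have "\<phi> a a m = 0" "\<phi> b b m = 0" using c a b by (auto simp: cochain2_def vzero_def)
  ultimately show ?thesis by (simp add: eq_neg_iff_add_eq_0)
qed

lemma bil_ext_ev_left:
  assumes "finite I" "a \<in> I"
  shows "bil_ext I C (ev a) v m = (\<Sum>k\<in>I. v k * C a k m)"
proof -
  have "bil_ext I C (ev a) v m = (\<Sum>i\<in>I. ev a i * (\<Sum>k\<in>I. v k * C i k m))"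
    by (simp add: bil_ext_def sum_distrib_left mult.assoc)
  also have "\<dots> = (\<Sum>k\<in>I. v k * C a k m)"
    using assms by (subst sum_eq_term[of I a]) (auto simp: ev_def)
  finally show ?thesis .
qed

lemma bil_ext_ev_ev:
  assumes "finite I" "a \<in> I" "b \<in> I"
  shows "bil_ext I C (ev a) (ev b) = C a b"
proof
  fix m
  show "bil_ext I C (ev a) (ev b) m = C a b m"
    using assms by (simp add: bil_ext_ev_left) (subst sum_eq_term[of I b]; auto simp: ev_def)
qed

text \<open>The differentials in coordinates: \<open>C i j m\<close>, \<open>P i j m\<close> and \<open>F a k\<close> are the coefficients of
  \<open>e\<^sub>m\<close> in \<open>[e\<^sub>i, e\<^sub>j]\<close>, of \<open>e\<^sub>m\<close> in a 2-cochain on \<open>(e\<^sub>i, e\<^sub>j)\<close> and of \<open>e\<^sub>k\<close> in \<open>f(e\<^sub>a)\<close>.\<close>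

definition d1_coeff ::
    "nat set \<Rightarrow> (nat \<Rightarrow> nat \<Rightarrow> nat \<Rightarrow> complex) \<Rightarrow> (nat \<Rightarrow> nat \<Rightarrow> complex) \<Rightarrow> nat \<Rightarrow> nat \<Rightarrow> nat \<Rightarrow> complex" where
  "d1_coeff I C F i j m =
     (\<Sum>k\<in>I. F j k * C i k m) - (\<Sum>k\<in>I. F i k * C j k m) - (\<Sum>k\<in>I. C i j k * F k m)"

definition d2_coeff ::
    "nat set \<Rightarrow> (nat \<Rightarrow> nat \<Rightarrow> nat \<Rightarrow> complex) \<Rightarrow> (nat \<Rightarrow> nat \<Rightarrow> nat \<Rightarrow> complex) \<Rightarrow> nat \<Rightarrow> nat \<Rightarrow> nat \<Rightarrow> nat \<Rightarrow> complex" where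
  "d2_coeff I C P a b c m =
     (\<Sum>k\<in>I. P b c k * C a k m) - (\<Sum>k\<in>I. P a c k * C b k m) + (\<Sum>k\<in>I. P a b k * C c k m)
     - (\<Sum>k\<in>I. C a b k * P k c m) + (\<Sum>k\<in>I. C a c k * P k b m) - (\<Sum>k\<in>I. C b c k * P k a m)"

lemma d1_bil_ext:
  fixes C :: "nat \<Rightarrow> nat \<Rightarrow> nat \<Rightarrow> complex"
  shows "d1 (bil_ext I C) (\<lambda>v m. \<Sum>a\<in>I. v a * F a m) x y m =
    (\<Sum>i\<in>I. \<Sum>j\<in>I. x i * y j * d1_coeff I C F i j m)"
proof -
  have bracket_image: "(\<Sum>i\<in>I. \<Sum>k\<in>I. u i * (\<Sum>a\<in>I. v a * F a k) * C i k m) =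
      (\<Sum>i\<in>I. \<Sum>j\<in>I. u i * v j * (\<Sum>k\<in>I. F j k * C i k m))" for u v :: vec
  proof -
    have "(\<Sum>i\<in>I. \<Sum>k\<in>I. u i * (\<Sum>a\<in>I. v a * F a k) * C i k m) =
        (\<Sum>i\<in>I. \<Sum>k\<in>I. \<Sum>a\<in>I. u i * (v a * (F a k * C i k m)))"
      by (simp add: sum_distrib_left sum_distrib_right mult.assoc)
    also have "\<dots> = (\<Sum>i\<in>I. \<Sum>a\<in>I. \<Sum>k\<in>I. u i * (v a * (F a k * C i k m)))"
      by (rule sum.cong[OF refl], rule sum.swap)
    finally show ?thesis by (simp add: sum_distrib_left mult.assoc)
  qed
  have image_bracket: "(\<Sum>a\<in>I. (\<Sum>i\<in>I. \<Sum>j\<in>I. x i * y j * C i j a) * F a m) =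
      (\<Sum>i\<in>I. \<Sum>j\<in>I. x i * y j * (\<Sum>k\<in>I. C i j k * F k m))"
  proof -
    have "(\<Sum>a\<in>I. (\<Sum>i\<in>I. \<Sum>j\<in>I. x i * y j * C i j a) * F a m) =
        (\<Sum>i\<in>I. \<Sum>a\<in>I. \<Sum>j\<in>I. x i * (y j * (C i j a * F a m)))"
      by (simp add: sum_distrib_right mult.assoc) (rule sum.swap)
    also have "\<dots> = (\<Sum>i\<in>I. \<Sum>j\<in>I. \<Sum>a\<in>I. x i * (y j * (C i j a * F a m)))"
      by (rule sum.cong[OF refl], rule sum.swap)
    finally show ?thesis by (simp add: sum_distrib_left mult.assoc)
  qed
  have swap: "(\<Sum>i\<in>I. \<Sum>j\<in>I. y i * x j * H j i) = (\<Sum>i\<in>I. \<Sum>j\<in>I. x i * y j * (H i j :: complex))"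
    for H by (subst sum.swap) (simp add: mult.commute)
  show ?thesis
    unfolding d1_def vsub_def bil_ext_def d1_coeff_def
    by (simp only: bracket_image image_bracket right_diff_distrib sum_subtractf
        swap[where H="\<lambda>j i. \<Sum>k\<in>I. F j k * C i k m"])
qed

lemma d2_coeff_eq_0_if_cocycle:
  assumes fin: "finite I" and C_in: "\<And>a b m. a \<in> I \<Longrightarrow> b \<in> I \<Longrightarrow> m \<notin> I \<Longrightarrow> C a b m = 0"
    and coch: "cochain2 I \<phi>"
    and cyc: "\<forall>x\<in>vsp I. \<forall>y\<in>vsp I. \<forall>z\<in>vsp I. d2 (bil_ext I C) \<phi> x y z = vzero"
    and abc: "a \<in> I" "b \<in> I" "c \<in> I"
  shows "d2_coeff I C (\<lambda>i j. \<phi> (ev i) (ev j)) a b c m = 0"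
proof -
  have bracket_left: "\<phi> (C u v) (ev w) m = (\<Sum>k\<in>I. C u v k * \<phi> (ev k) (ev w) m)"
    if "u \<in> I" "v \<in> I" "w \<in> I" for u v w
  proof -
    have "C u v \<in> vsp I" using C_in that by (auto simp: vsp_def)
    moreover have "lin_on I (\<lambda>x. \<phi> x (ev w))" using coch ev_in_vsp[OF that(3)] by (simp add: cochain2_def)
    ultimately show ?thesis using lin_on_expand fin by blast
  qed
  have "d2 (bil_ext I C) \<phi> (ev a) (ev b) (ev c) m = 0"
    using cyc ev_in_vsp abc by (simp add: vzero_def)
  thus ?thesis
    unfolding d2_def d2_coeff_def using abc
    by (simp only: bil_ext_ev_left[OF fin] bil_ext_ev_ev[OF fin] bracket_left)
qed

lemma H2_adj_zero_if_coeff: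
  assumes fin: "finite I" and C_in: "\<And>a b m. a \<in> I \<Longrightarrow> b \<in> I \<Longrightarrow> m \<notin> I \<Longrightarrow> C a b m = 0"
    and coboundary: "\<And>P. (\<And>i j m. P i j m = - P j i m) \<Longrightarrow>
        (\<And>a b c m. a \<in> I \<Longrightarrow> b \<in> I \<Longrightarrow> c \<in> I \<Longrightarrow> m \<in> I \<Longrightarrow> d2_coeff I C P a b c m = 0) \<Longrightarrow>
        \<exists>F. \<forall>i\<in>I. \<forall>j\<in>I. \<forall>m\<in>I. P i j m = d1_coeff I C F i j m"
  shows "H2_adj_zero I (bil_ext I C)"
  unfolding H2_adj_zero_def
proof (intro allI impI)
  fix \<phi> assume "cochain2 I \<phi> \<and> (\<forall>x\<in>vsp I. \<forall>y\<in>vsp I. \<forall>z\<in>vsp I. d2 (bil_ext I C) \<phi> x y z = vzero)"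
  hence coch: "cochain2 I \<phi>" and cyc: "\<forall>x\<in>vsp I. \<forall>y\<in>vsp I. \<forall>z\<in>vsp I. d2 (bil_ext I C) \<phi> x y z = vzero"
    by auto
  define P where "P i j m = (if i \<in> I \<and> j \<in> I then \<phi> (ev i) (ev j) m else 0)" for i j m
  have "P i j m = - P j i m" for i j m
    unfolding P_def using cochain2_antisym[OF coch ev_in_vsp ev_in_vsp] by (metis minus_zero)
  moreover have "d2_coeff I C P a b c m = 0" if "a \<in> I" "b \<in> I" "c \<in> I" for a b c m
  proof -
    have "d2_coeff I C P a b c m = d2_coeff I C (\<lambda>i j. \<phi> (ev i) (ev j)) a b c m"
      unfolding d2_coeff_def P_def using that by (simp cong: sum.cong)
    thus ?thesis using d2_coeff_eq_0_if_cocycle[OF fin C_in coch cyc that] by simp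
  qed
  ultimately obtain F where F: "\<forall>i\<in>I. \<forall>j\<in>I. \<forall>m\<in>I. P i j m = d1_coeff I C F i j m"
    using coboundary by blast
  define F' where "F' a m = (if m \<in> I then F a m else 0)" for a m
  have basis: "\<phi> (ev i) (ev j) m = d1_coeff I C F' i j m" if "i \<in> I" "j \<in> I" for i j m
  proof (cases "m \<in> I")
    case True
    have "d1_coeff I C F' i j m = d1_coeff I C F i j m"
      unfolding d1_coeff_def F'_def using True by (simp cong: sum.cong)
    thus ?thesis using F that True by (simp add: P_def)
  next
    case False
    thus ?thesis using cochain2_in_vsp[OF coch ev_in_vsp ev_in_vsp] C_in that
      by (simp add: d1_coeff_def F'_def)
  qed
  define f where "f v m = (\<Sum>a\<in>I. v a * F' a m)" for v m
  have "lin_on I f" unfolding f_def[abs_def] by (rule lin_on_matrix) (simp add: F'_def)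
  moreover have "\<phi> x y m = d1 (bil_ext I C) f x y m" if "x \<in> vsp I" "y \<in> vsp I" for x y m
    using cochain2_expand[OF coch fin that] d1_bil_ext[of I C F' x y m] basis
    by (simp add: f_def[abs_def] cong: sum.cong)
  ultimately show "\<exists>f. lin_on I f \<and> (\<forall>x\<in>vsp I. \<forall>y\<in>vsp I. \<phi> x y = d1 (bil_ext I C) f x y)"
    by blast
qed

lemma d1_coeff_cong:
  assumes "\<And>k. k \<in> I \<Longrightarrow> (C i k m \<noteq> 0 \<longrightarrow> G j k = H j k) \<and> (C j k m \<noteq> 0 \<longrightarrow> G i k = H i k)
      \<and> (C i j k \<noteq> 0 \<longrightarrow> G k m = H k m)"
  shows "d1_coeff I C G i j m = d1_coeff I C H i j m"
proof -
  have "(\<Sum>k\<in>I. G j k * C i k m) = (\<Sum>k\<in>I. H j k * C i k m)"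
    "(\<Sum>k\<in>I. G i k * C j k m) = (\<Sum>k\<in>I. H i k * C j k m)"
    "(\<Sum>k\<in>I. C i j k * G k m) = (\<Sum>k\<in>I. C i j k * H k m)"
    by (intro sum.cong refl; metis assms mult_eq_0_iff)+
  thus ?thesis by (simp add: d1_coeff_def)
qed

lemma d1_coeff_add: "d1_coeff I C (\<lambda>a k. G a k + H a k) i j m = d1_coeff I C G i j m + d1_coeff I C H i j m"
  unfolding d1_coeff_def by (simp add: distrib_right distrib_left sum.distrib)

lemma d1_coeff_divide: "d1_coeff I C (\<lambda>a k. H a k / u) i j m = d1_coeff I C H i j m / u"
  unfolding d1_coeff_def by (simp add: sum_divide_distrib diff_divide_distrib)

lemma d1_coeff_antisym:
  assumes "\<And>k. C j i k = - C i j k"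
  shows "d1_coeff I C G j i m = - d1_coeff I C G i j m"
  unfolding d1_coeff_def using assms by (simp add: sum_negf)

text \<open>Cartan's homotopy formula for the diagonal derivation \<open>ad e\<^sub>t\<close>, in coordinates.\<close>

lemma d1_coeff_diagonal_contraction:
  fixes C P :: "nat \<Rightarrow> nat \<Rightarrow> nat \<Rightarrow> complex" and w :: "nat \<Rightarrow> int"
  assumes fin: "finite I" and t: "t \<in> I"
    and C_t: "\<And>k m. k \<in> I \<Longrightarrow> m \<in> I \<Longrightarrow> C t k m = (if k = m then - of_int (w k) else 0)"
    and P_antisym: "\<And>i j m. P i j m = - P j i m"
    and cocycle: "d2_coeff I C P t i j m = 0"
    and ijm: "i \<in> I" "j \<in> I" "m \<in> I"
  shows "of_int (w i + w j - w m) * P i j m = d1_coeff I C (P t) i j m"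
proof -
  have "(\<Sum>k\<in>I. P i j k * C t k m) = - of_int (w m) * P i j m"
    using ijm by (subst sum_eq_term[OF fin, of m]) (auto simp: C_t)
  moreover have "(\<Sum>k\<in>I. C t i k * P k j m) = - of_int (w i) * P i j m"
    using ijm by (subst sum_eq_term[OF fin, of i]) (auto simp: C_t)
  moreover have "(\<Sum>k\<in>I. C t j k * P k i m) = of_int (w j) * P i j m"
    using ijm P_antisym[of j i m] by (subst sum_eq_term[OF fin, of j]) (auto simp: C_t)
  moreover have "(\<Sum>k\<in>I. C i j k * P k t m) = - (\<Sum>k\<in>I. C i j k * P t k m)"
    by (subst sum_negf[symmetric], rule sum.cong) (auto simp: P_antisym[of _ t])
  ultimately show ?thesis
    using cocycle unfolding d2_coeff_def d1_coeff_def by (simp add: algebra_simps)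
qed

definition diag_pair_matrix ::
    "nat \<Rightarrow> nat \<Rightarrow> (nat \<Rightarrow> complex) \<Rightarrow> complex \<Rightarrow> complex \<Rightarrow> nat \<Rightarrow> nat \<Rightarrow> complex" where
  "diag_pair_matrix p q D r s a k =
     (if a = k then D a else 0) + (if a = p \<and> k = q then r else 0) + (if a = q \<and> k = p then s else 0)"

lemma d1_coeff_diag_pair_matrix:
  fixes C :: "nat \<Rightarrow> nat \<Rightarrow> nat \<Rightarrow> complex"
  assumes fin: "finite I" and pq: "p \<in> I" "q \<in> I" and ijm: "i \<in> I" "j \<in> I" "m \<in> I"
    and antisym: "C j i m = - C i j m"
  shows "d1_coeff I C (diag_pair_matrix p q D r s) i j m = C i j m * (D i + D j - D m)
     + r * ((if j = p then C i q m else 0) - (if i = p then C j q m else 0) - (if m = q then C i j p else 0))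
     + s * ((if j = q then C i p m else 0) - (if i = q then C j p m else 0) - (if m = p then C i j q else 0))"
proof -
  have entry: "d1_coeff I C (\<lambda>a k. if a = p \<and> k = q then r else 0) i j m =
      r * ((if j = p then C i q m else 0) - (if i = p then C j q m else 0) - (if m = q then C i j p else 0))"
    if "p \<in> I" "q \<in> I" for p q r
  proof -
    have "(\<Sum>k\<in>I. (if j = p \<and> k = q then r else 0) * C i k m) = (if j = p then r * C i q m else 0)"
      "(\<Sum>k\<in>I. (if i = p \<and> k = q then r else 0) * C j k m) = (if i = p then r * C j q m else 0)"
      "(\<Sum>k\<in>I. C i j k * (if k = p \<and> m = q then r else 0)) = (if m = q then r * C i j p else 0)"
      using that by (subst sum_eq_term[OF fin]; auto)+
    thus ?thesis unfolding d1_coeff_def by (simp add: algebra_simps)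
  qed
  have "(\<Sum>k\<in>I. (if j = k then D j else 0) * C i k m) = D j * C i j m"
    "(\<Sum>k\<in>I. (if i = k then D i else 0) * C j k m) = D i * C j i m"
    "(\<Sum>k\<in>I. C i j k * (if k = m then D k else 0)) = C i j m * D m"
    using ijm by (subst sum_eq_term[OF fin]; auto)+
  hence diag: "d1_coeff I C (\<lambda>a k. if a = k then D a else 0) i j m = C i j m * (D i + D j - D m)"
    unfolding d1_coeff_def antisym by (simp add: algebra_simps)
  show ?thesis
    unfolding diag_pair_matrix_def d1_coeff_add diag entry[OF pq] entry[OF pq(2,1)] ..
qed

section \<open>Algebras with a maximal torus\<close>

text \<open>Nilradical basis
  vectors have distinct weights, and the torus is maximal: by \<open>additive_diag\<close>, every diagonal
  derivation of the nilradical is a combination of \<open>al\<close> and \<open>be\<close>.\<close>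

locale toral_table =
  fixes I :: "nat set" and C :: "nat \<Rightarrow> nat \<Rightarrow> nat \<Rightarrow> complex"
    and al be :: "nat \<Rightarrow> int" and tx ty e1 e2 :: nat
  assumes finite_I: "finite I"
    and torus: "tx \<in> I" "ty \<in> I" "tx \<noteq> ty"
    and C_antisym: "C j i m = - C i j m"
    and C_outside: "m \<notin> I \<Longrightarrow> C i j m = 0"
    and C_weight: "i \<in> I \<Longrightarrow> j \<in> I \<Longrightarrow> m \<in> I \<Longrightarrow> C i j m \<noteq> 0 \<Longrightarrow>
      al i + al j = al m \<and> be i + be j = be m"
    and C_tx: "k \<in> I \<Longrightarrow> m \<in> I \<Longrightarrow> C tx k m = (if k = m then - of_int (al k) else 0)"
    and C_ty: "k \<in> I \<Longrightarrow> m \<in> I \<Longrightarrow> C ty k m = (if k = m then - of_int (be k) else 0)"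
    and weight_inj: "a \<in> I \<Longrightarrow> k \<in> I \<Longrightarrow> al a = al k \<Longrightarrow> be a = be k \<Longrightarrow>
      a = k \<or> a \<in> {tx, ty} \<and> k \<in> {tx, ty}"
    and weight_nonneg: "a \<in> I \<Longrightarrow> 0 \<le> al a \<and> 0 \<le> be a"
    and generators: "e1 \<in> I" "e2 \<in> I" "al e1 = 1" "be e1 = 0" "al e2 = 0" "be e2 = 1"
    and additive_diag: "(\<And>i j m. i \<in> I - {tx, ty} \<Longrightarrow> j \<in> I - {tx, ty} \<Longrightarrow> m \<in> I - {tx, ty} \<Longrightarrow>
        C i j m \<noteq> 0 \<Longrightarrow> D i + D j = D m) \<Longrightarrow>
      a \<in> I - {tx, ty} \<Longrightarrow> D a = of_int (al a) * D e1 + of_int (be a) * (D e2 :: complex)"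
begin

definition balanced :: "nat \<Rightarrow> nat \<Rightarrow> nat \<Rightarrow> bool" where
  "balanced i j m \<longleftrightarrow> al i + al j = al m \<and> be i + be j = be m"

definition cocycle :: "(nat \<Rightarrow> nat \<Rightarrow> nat \<Rightarrow> complex) \<Rightarrow> bool" where
  "cocycle P \<longleftrightarrow> (\<forall>i j m. P i j m = - P j i m) \<and>
     (\<forall>a\<in>I. \<forall>b\<in>I. \<forall>c\<in>I. \<forall>m\<in>I. d2_coeff I C P a b c m = 0)"

lemma torus_weights: "al tx = 0" "be tx = 0" "al ty = 0" "be ty = 0"
proof -
  have "C tx tx tx = 0" "C ty ty ty = 0" using C_antisym by (metis add.inverse_unique add_cancel_right_right
      eq_neg_iff_add_eq_0 mult_2 mult_eq_0_iff zero_neq_numeral)+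
  moreover have "C ty tx tx = 0" "C tx ty ty = 0"
    using C_antisym[of tx ty] C_antisym[of ty tx] C_tx[of ty tx] C_ty[of tx ty] torus by auto
  ultimately show "al tx = 0" "be tx = 0" "al ty = 0" "be ty = 0"
    using C_tx[of tx tx] C_ty[of tx tx] C_tx[of ty ty] C_ty[of ty ty] torus by auto
qed

lemma C_eq_0_if_unbalanced: "a \<in> I \<Longrightarrow> b \<in> I \<Longrightarrow> c \<in> I \<Longrightarrow> \<not> balanced a b c \<Longrightarrow> C a b c = 0"
  using C_weight by (auto simp: balanced_def)

lemma sum_bracket_single:
  assumes "a \<in> I" "c \<in> I" "k0 \<in> I" "\<And>k. k \<in> I \<Longrightarrow> k \<noteq> k0 \<Longrightarrow> \<not> balanced a k c"
  shows "(\<Sum>k\<in>I. f k * C a k c) = f k0 * C a k0 c"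
  using assms C_eq_0_if_unbalanced by (subst sum_eq_term[OF finite_I assms(3)]) auto

lemma sum_bracket_none:
  assumes "a \<in> I" "c \<in> I" "\<And>k. k \<in> I \<Longrightarrow> \<not> balanced a k c"
  shows "(\<Sum>k\<in>I. f k * C a k c) = 0"
  using assms C_eq_0_if_unbalanced by (simp add: sum.neutral)

lemma sum_image_single:
  assumes "a \<in> I" "b \<in> I" "k0 \<in> I" "\<And>k. k \<in> I \<Longrightarrow> k \<noteq> k0 \<Longrightarrow> \<not> balanced a b k"
  shows "(\<Sum>k\<in>I. C a b k * f k) = C a b k0 * f k0"
  using assms C_eq_0_if_unbalanced by (subst sum_eq_term[OF finite_I assms(3)]) auto

lemma sum_image_none:
  assumes "a \<in> I" "b \<in> I" "\<And>k. k \<in> I \<Longrightarrow> \<not> balanced a b k"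
  shows "(\<Sum>k\<in>I. C a b k * f k) = 0"
  using assms C_eq_0_if_unbalanced by (simp add: sum.neutral)

lemma d1_coeff_cong_weight:
  assumes ijm: "i \<in> I" "j \<in> I" "m \<in> I"
    and GH: "\<And>a b. a \<in> I \<Longrightarrow> b \<in> I \<Longrightarrow> al a - al b = al i + al j - al m \<Longrightarrow>
      be a - be b = be i + be j - be m \<Longrightarrow> G a b = H a b"
  shows "d1_coeff I C G i j m = d1_coeff I C H i j m"
proof (rule d1_coeff_cong)
  fix k assume k: "k \<in> I"
  show "(C i k m \<noteq> 0 \<longrightarrow> G j k = H j k) \<and> (C j k m \<noteq> 0 \<longrightarrow> G i k = H i k) \<and>
      (C i j k \<noteq> 0 \<longrightarrow> G k m = H k m)"
    using C_weight[OF ijm(1) k ijm(3)] C_weight[OF ijm(2) k ijm(3)] C_weight[OF ijm(1,2) k]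
      GH[of j k] GH[of i k] GH[of k m] k ijm by auto
qed

lemma balanced_nilradical:
  assumes "i \<in> I - {tx, ty}" "j \<in> I - {tx, ty}" "m \<in> I" "balanced i j m"
  shows "m \<in> I - {tx, ty}"
proof -
  have "m \<notin> {tx, ty}"
  proof
    assume "m \<in> {tx, ty}"
    hence "al i = al tx" "be i = be tx"
      using assms weight_nonneg[of i] weight_nonneg[of j] torus_weights by (auto simp: balanced_def)
    thus False using weight_inj[of i tx] assms torus by auto
  qed
  thus ?thesis using assms by simp
qed

lemma balanced_torus:
  assumes "t \<in> {tx, ty}" "j \<in> I" "m \<in> I" "balanced t j m"
  shows "j = m \<or> j \<in> {tx, ty} \<and> m \<in> {tx, ty}"
  using assms weight_inj[of j m] torus_weights by (auto simp: balanced_def)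

lemma d1_coeff_balanced:
  assumes ijm: "i \<in> I" "j \<in> I" "m \<in> I" and "balanced i j m"
  shows "d1_coeff I C G i j m = d1_coeff I C (diag_pair_matrix tx ty (\<lambda>a. G a a) (G tx ty) (G ty tx)) i j m"
proof (rule d1_coeff_cong_weight[OF ijm])
  fix a b assume "a \<in> I" "b \<in> I" "al a - al b = al i + al j - al m" "be a - be b = be i + be j - be m"
  hence "a = b \<or> a \<in> {tx, ty} \<and> b \<in> {tx, ty}"
    using weight_inj \<open>balanced i j m\<close> by (simp add: balanced_def)
  thus "G a b = diag_pair_matrix tx ty (\<lambda>a. G a a) (G tx ty) (G ty tx) a b"
    using torus by (auto simp: diag_pair_matrix_def)
qed

lemma d1_coeff_diag_pair_nilradical:
  assumes "i \<in> I - {tx, ty}" "j \<in> I - {tx, ty}" "m \<in> I - {tx, ty}"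
  shows "d1_coeff I C (diag_pair_matrix tx ty D r s) i j m = C i j m * (D i + D j - D m)"
  using d1_coeff_diag_pair_matrix[OF finite_I torus(1,2), of i j m C D r s] assms C_antisym[of j i m]
  by auto

lemma d1_coeff_diag_pair_tx:
  assumes "a \<in> I - {tx, ty}"
  shows "d1_coeff I C (diag_pair_matrix tx ty D r s) tx a a = - of_int (al a) * D tx - of_int (be a) * r"
  using assms C_antisym[of a tx a] C_antisym[of a ty a] C_tx[of a a] C_ty[of a a] torus
  by (subst d1_coeff_diag_pair_matrix[OF finite_I torus(1,2) torus(1)]) (auto simp: algebra_simps)

lemma d1_coeff_diag_pair_ty:
  assumes "a \<in> I - {tx, ty}"
  shows "d1_coeff I C (diag_pair_matrix tx ty D r s) ty a a = - of_int (be a) * D ty - of_int (al a) * s"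
  using assms C_antisym[of a tx a] C_antisym[of a ty a] C_tx[of a a] C_ty[of a a] torus
  by (subst d1_coeff_diag_pair_matrix[OF finite_I torus(1,2) torus(2)]) (auto simp: algebra_simps)

lemma d1_coeff_torus:
  assumes "i \<in> {tx, ty}" "j \<in> {tx, ty}" "m \<in> {tx, ty}"
  shows "d1_coeff I C G i j m = 0"
proof -
  have "C t k u = 0" if "t \<in> {tx, ty}" "k \<in> I" "u \<in> {tx, ty}" for t k u
    using that C_tx[of k u] C_ty[of k u] torus torus_weights by auto
  moreover have "C i j k = 0" if "k \<in> I" for k
    using that assms C_tx[of j k] C_ty[of j k] torus torus_weights by auto
  ultimately show ?thesis using assms unfolding d1_coeff_def by simp
qed

lemma cocycle_antisym: "cocycle P \<Longrightarrow> P i j m = - P j i m"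
  unfolding cocycle_def by blast

lemma cocycle_d2_coeff:
  "cocycle P \<Longrightarrow> a \<in> I \<Longrightarrow> b \<in> I \<Longrightarrow> c \<in> I \<Longrightarrow> m \<in> I \<Longrightarrow> d2_coeff I C P a b c m = 0"
  unfolding cocycle_def by blast

lemma cocycle_contract_tx:
  assumes "cocycle P" "i \<in> I" "j \<in> I" "m \<in> I"
  shows "of_int (al i + al j - al m) * P i j m = d1_coeff I C (P tx) i j m"
  by (rule d1_coeff_diagonal_contraction[OF finite_I torus(1) C_tx cocycle_antisym[OF assms(1)]
        cocycle_d2_coeff[OF assms(1) torus(1) assms(2-4)] assms(2-4)])

lemma cocycle_contract_ty:
  assumes "cocycle P" "i \<in> I" "j \<in> I" "m \<in> I"
  shows "of_int (be i + be j - be m) * P i j m = d1_coeff I C (P ty) i j m"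
  by (rule d1_coeff_diagonal_contraction[OF finite_I torus(2) C_ty cocycle_antisym[OF assms(1)]
        cocycle_d2_coeff[OF assms(1) torus(2) assms(2-4)] assms(2-4)])

lemma cocycle_torus_balanced:
  assumes "cocycle P" "t \<in> {tx, ty}" "i \<in> I" "j \<in> I" "m \<in> I" "balanced i j m"
  shows "d1_coeff I C (P t) i j m = 0"
  using assms cocycle_contract_tx[OF assms(1,3-5)] cocycle_contract_ty[OF assms(1,3-5)]
  by (auto simp: balanced_def)

lemma cocycle_diag_additive:
  assumes "cocycle P" "t \<in> {tx, ty}"
    and ijm: "i \<in> I - {tx, ty}" "j \<in> I - {tx, ty}" "m \<in> I - {tx, ty}" and "C i j m \<noteq> 0"
  shows "P t i i + P t j j = P t m m"
proof -
  have "balanced i j m" using C_weight assms by (simp add: balanced_def)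
  hence "d1_coeff I C (P t) i j m = 0" using cocycle_torus_balanced assms by blast
  hence "C i j m * (P t i i + P t j j - P t m m) = 0"
    using d1_coeff_balanced[OF _ _ _ \<open>balanced i j m\<close>] d1_coeff_diag_pair_nilradical[OF ijm] ijm
    by simp
  thus ?thesis using assms by simp
qed

lemma cocycle_torus_diag:
  assumes "cocycle P" "t \<in> {tx, ty}" "a \<in> I - {tx, ty}"
  shows "P t a a = of_int (al a) * P t e1 e1 + of_int (be a) * P t e2 e2"
  using additive_diag[of "\<lambda>a. P t a a"] cocycle_diag_additive[OF assms(1,2)] assms(3) by blast

lemma generators_nilradical: "e1 \<in> I - {tx, ty}" "e2 \<in> I - {tx, ty}"
  using generators torus_weights by auto

lemma cocycle_torus_mixed:
  assumes "cocycle P"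
  shows "P tx ty tx = 0" "P tx ty ty = 0"
proof -
  have "d1_coeff I C (P tx) ty e e = - of_int (be e) * P tx ty ty - of_int (al e) * P tx ty tx"
    if "e \<in> I - {tx, ty}" for e
  proof -
    have "balanced ty e e" using torus_weights by (simp add: balanced_def)
    hence "d1_coeff I C (P tx) ty e e = d1_coeff I C
        (diag_pair_matrix tx ty (\<lambda>a. P tx a a) (P tx tx ty) (P tx ty tx)) ty e e"
      using d1_coeff_balanced that torus by blast
    thus ?thesis using d1_coeff_diag_pair_ty[OF that] by simp
  qed
  moreover have "d1_coeff I C (P tx) ty e e = 0" if "e \<in> I - {tx, ty}" for e
    using cocycle_torus_balanced[OF assms, of tx ty e e] that torus torus_weights
    by (simp add: balanced_def)
  ultimately show "P tx ty tx = 0" "P tx ty ty = 0"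
    using generators_nilradical generators(3-6) by force+
qed

text \<open>The torus acts semisimply, so a cocycle is cohomologous to its weight-zero part:
  \<open>g\<close> below is the usual homotopy, dividing by the weight defect of each matrix entry.\<close>

lemma coboundary_if_balanced_match:
  assumes P: "cocycle P"
    and F0_weight: "\<And>a k. a \<in> I \<Longrightarrow> k \<in> I \<Longrightarrow> F0 a k \<noteq> 0 \<Longrightarrow> al a = al k \<and> be a = be k"
    and F0_match: "\<And>i j m. i \<in> I \<Longrightarrow> j \<in> I \<Longrightarrow> m \<in> I \<Longrightarrow> balanced i j m \<Longrightarrow>
      P i j m = d1_coeff I C F0 i j m"
  shows "\<exists>F. \<forall>i\<in>I. \<forall>j\<in>I. \<forall>m\<in>I. P i j m = d1_coeff I C F i j m"
proof -
  define g where "g a k = (if al a \<noteq> al k then P tx a k / of_int (al a - al k)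
     else if be a \<noteq> be k then P ty a k / of_int (be a - be k) else 0)" for a k
  have "P i j m = d1_coeff I C (\<lambda>a k. g a k + F0 a k) i j m"
    if ijm: "i \<in> I" "j \<in> I" "m \<in> I" for i j m
  proof (cases "balanced i j m")
    case True
    have "d1_coeff I C g i j m = d1_coeff I C (\<lambda>a k. 0) i j m"
      using True by (intro d1_coeff_cong_weight[OF ijm]) (simp add: g_def balanced_def)
    thus ?thesis using F0_match[OF ijm True] by (simp add: d1_coeff_add d1_coeff_def)
  next
    case unbalanced: False
    have "d1_coeff I C F0 i j m = d1_coeff I C (\<lambda>a k. 0) i j m"
    proof (rule d1_coeff_cong_weight[OF ijm])
      fix a b assume "a \<in> I" "b \<in> I" "al a - al b = al i + al j - al m" "be a - be b = be i + be j - be m"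
      thus "F0 a b = 0" using unbalanced F0_weight[of a b] by (cases "F0 a b = 0") (auto simp: balanced_def)
    qed
    moreover have "d1_coeff I C g i j m = P i j m"
    proof (cases "al i + al j = al m")
      case False
      let ?u = "of_int (al i + al j - al m) :: complex"
      have u: "?u \<noteq> 0" using False by (simp only: of_int_eq_0_iff)
      have "d1_coeff I C g i j m = d1_coeff I C (\<lambda>a k. P tx a k / ?u) i j m"
        using False by (intro d1_coeff_cong_weight[OF ijm]) (simp add: g_def)
      also have "\<dots> = ?u * P i j m / ?u"
        by (simp only: d1_coeff_divide cocycle_contract_tx[OF P ijm, symmetric])
      also have "\<dots> = P i j m" using u by (rule nonzero_mult_div_cancel_left)
      finally show ?thesis .
    next
      case True
      let ?u = "of_int (be i + be j - be m) :: complex"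
      have "be i + be j \<noteq> be m" using True unbalanced by (simp add: balanced_def)
      hence u: "?u \<noteq> 0" by (simp only: of_int_eq_0_iff)
      have "d1_coeff I C g i j m = d1_coeff I C (\<lambda>a k. P ty a k / ?u) i j m"
        using True \<open>be i + be j \<noteq> be m\<close> by (intro d1_coeff_cong_weight[OF ijm]) (simp add: g_def)
      also have "\<dots> = ?u * P i j m / ?u"
        by (simp only: d1_coeff_divide cocycle_contract_ty[OF P ijm, symmetric])
      also have "\<dots> = P i j m" using u by (rule nonzero_mult_div_cancel_left)
      finally show ?thesis .
    qed
    ultimately show ?thesis by (simp add: d1_coeff_add d1_coeff_def)
  qed
  thus ?thesis by blast
qed

text \<open>Normal form of a cocycle's weight-zero part: the torus columns are fixed by
  \<open>cocycle_torus_diag\<close>, the nilradical part by a diagonal matrix \<open>D\<close>.\<close>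

lemma cocycle_balanced_match_oriented:
  assumes P: "cocycle P"
    and D: "\<forall>i\<in>I - {tx, ty}. \<forall>j\<in>I - {tx, ty}. \<forall>m\<in>I. i < j \<longrightarrow>
      balanced i j m \<longrightarrow> P i j m = C i j m * (D i + D j - D m)"
    and F0: "F0 = diag_pair_matrix tx ty (D(tx := - P tx e1 e1, ty := - P ty e2 e2))
      (- P tx e2 e2) (- P ty e1 e1)"
    and ijm: "i \<in> I" "j \<in> I" "m \<in> I" and bal: "balanced i j m"
    and orient: "i \<in> {tx, ty} \<or> i = j \<or> j \<notin> {tx, ty} \<and> i < j"
  shows "P i j m = d1_coeff I C F0 i j m"
proof -
  have self_neg: "z = 0" if "z = - z" for z :: complex using that by simp
  consider "i = j" | "i \<in> {tx, ty}" "i \<noteq> j" | "i \<notin> {tx, ty}" "j \<notin> {tx, ty}" "i < j"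
    using orient by blast
  thus ?thesis
  proof cases
    case 1
    have "P i i m = 0" by (rule self_neg, rule cocycle_antisym[OF P])
    moreover have "d1_coeff I C F0 i i m = 0" by (rule self_neg, rule d1_coeff_antisym[OF C_antisym])
    ultimately show ?thesis using 1 by simp
  next
    case 2
    show ?thesis
    proof (cases "j \<in> {tx, ty}")
      case True
      hence "m \<in> {tx, ty}" using balanced_torus[OF 2(1) ijm(2,3) bal] 2 by auto
      hence "P i j m = 0"
        using 2 True cocycle_torus_mixed[OF P] cocycle_antisym[OF P, of ty tx m] torus by auto
      thus ?thesis using d1_coeff_torus 2 True \<open>m \<in> {tx, ty}\<close> by simp
    next
      case False
      hence jm: "m = j" "j \<in> I - {tx, ty}" using balanced_torus[OF 2(1) ijm(2,3) bal] ijm by auto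
      have "d1_coeff I C F0 i j j = P i j j"
        using 2(1) torus cocycle_torus_diag[OF P 2(1) jm(2)]
        by (auto simp: F0 d1_coeff_diag_pair_tx[OF jm(2)] d1_coeff_diag_pair_ty[OF jm(2)] algebra_simps)
      thus ?thesis using jm by simp
    qed
  next
    case 3
    hence "m \<in> I - {tx, ty}" using balanced_nilradical ijm bal by blast
    thus ?thesis using 3 ijm D bal by (simp add: F0 d1_coeff_diag_pair_nilradical)
  qed
qed

lemma cocycle_balanced_match:
  assumes P: "cocycle P"
    and D: "\<forall>i\<in>I - {tx, ty}. \<forall>j\<in>I - {tx, ty}. \<forall>m\<in>I. i < j \<longrightarrow>
      balanced i j m \<longrightarrow> P i j m = C i j m * (D i + D j - D m)"
    and F0: "F0 = diag_pair_matrix tx ty (D(tx := - P tx e1 e1, ty := - P ty e2 e2))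
      (- P tx e2 e2) (- P ty e1 e1)"
    and ijm: "i \<in> I" "j \<in> I" "m \<in> I" and bal: "balanced i j m"
  shows "P i j m = d1_coeff I C F0 i j m"
proof (cases "i \<in> {tx, ty} \<or> i = j \<or> j \<notin> {tx, ty} \<and> i < j")
  case True
  thus ?thesis by (rule cocycle_balanced_match_oriented[OF P D F0 ijm bal])
next
  case False
  have "balanced j i m" using bal by (auto simp: balanced_def)
  hence "P j i m = d1_coeff I C F0 j i m"
    using False by (intro cocycle_balanced_match_oriented[OF P D F0 ijm(2,1,3)]) auto
  thus ?thesis using cocycle_antisym[OF P, of j i m] d1_coeff_antisym[of C j i I F0 m, OF C_antisym] by simp
qed

theorem H2_adj_zero_if_nilradical_match:
  assumes "\<And>P. cocycle P \<Longrightarrow> \<exists>D. \<forall>i\<in>I - {tx, ty}. \<forall>j\<in>I - {tx, ty}. \<forall>m\<in>I. i < j \<longrightarrow>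
      balanced i j m \<longrightarrow> P i j m = C i j m * (D i + D j - D m)"
  shows "H2_adj_zero I (bil_ext I C)"
proof (rule H2_adj_zero_if_coeff[OF finite_I C_outside])
  fix P assume "\<And>i j m. P i j m = - P j i m"
    "\<And>a b c m. a \<in> I \<Longrightarrow> b \<in> I \<Longrightarrow> c \<in> I \<Longrightarrow> m \<in> I \<Longrightarrow> d2_coeff I C P a b c m = 0"
  hence P: "cocycle P" unfolding cocycle_def by blast
  then obtain D where D: "\<forall>i\<in>I - {tx, ty}. \<forall>j\<in>I - {tx, ty}. \<forall>m\<in>I. i < j \<longrightarrow>
      balanced i j m \<longrightarrow> P i j m = C i j m * (D i + D j - D m)"
    using assms by blast
  define F0 where "F0 = diag_pair_matrix tx ty (D(tx := - P tx e1 e1, ty := - P ty e2 e2))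
      (- P tx e2 e2) (- P ty e1 e1)"
  have "F0 a k \<noteq> 0 \<Longrightarrow> al a = al k \<and> be a = be k" for a k
    using torus_weights by (auto simp: F0_def diag_pair_matrix_def split: if_splits)
  moreover have "P i j m = d1_coeff I C F0 i j m"
    if "i \<in> I" "j \<in> I" "m \<in> I" "balanced i j m" for i j m
    by (rule cocycle_balanced_match[OF P D F0_def that])
  ultimately show "\<exists>F. \<forall>i\<in>I. \<forall>j\<in>I. \<forall>m\<in>I. P i j m = d1_coeff I C F i j m"
    using coboundary_if_balanced_match[OF P] by blast
qed

end

lemma linear_recurrence:
  fixes f :: "nat \<Rightarrow> 'a :: comm_semiring_1"
  assumes "\<And>k. a \<le> k \<Longrightarrow> k < b \<Longrightarrow> f (Suc k) = f k + c" and "a \<le> k" "k \<le> b"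
  shows "f k = f a + of_nat (k - a) * c"
  using assms(2,3)
proof (induction k)
  case (Suc k)
  show ?case
  proof (cases "a = Suc k")
    case False
    with Suc.prems have "a \<le> k" "k < b" by auto
    thus ?thesis using Suc.IH assms(1) by (simp add: Suc_diff_le algebra_simps)
  qed simp
qed simp

section \<open>The algebra \<open>R(g^1_(n,1), 2)\<close>\<close>

text \<open>\<open>weight_x1 n i\<close> and \<open>weight_y1 n i\<close> (and \<open>weight_x2\<close>, \<open>weight_y2\<close> below) are the eigenvalues
  in \<open>[e\<^sub>i, x]\<close> and \<open>[e\<^sub>i, y]\<close>; the indices \<open>n + 1\<close> and \<open>n + 2\<close> stand for \<open>x\<close> and \<open>y\<close>.\<close>

definition weight_x1 :: "nat \<Rightarrow> nat \<Rightarrow> int" where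
  "weight_x1 n i = (if i = 1 then 1 else if 2 \<le> i \<and> i \<le> n - 1 then int i - 2
     else if i = n then int n - 4 else 0)"

definition weight_y1 :: "nat \<Rightarrow> nat \<Rightarrow> int" where
  "weight_y1 n i = (if 2 \<le> i \<and> i \<le> n - 1 then 1 else if i = n then 2 else 0)"

lemma tab1_weight:
  "n > 5 \<Longrightarrow> tab1 n i j m \<noteq> 0 \<Longrightarrow> 1 \<le> m \<and> m \<le> n + 2 \<and>
    weight_x1 n i + weight_x1 n j = weight_x1 n m \<and> weight_y1 n i + weight_y1 n j = weight_y1 n m"
  by (auto simp: tab1_def ev_def smul_def vzero_def weight_x1_def weight_y1_def split: if_splits)

lemma tab1_torus_entries:
  assumes "n > 5" "1 \<le> k" "k \<le> n + 2"
  shows "tab1 n (n + 1) k m = 0" "tab1 n (n + 2) k m = 0"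
    "tab1 n k (n + 1) m = (if k = m then of_int (weight_x1 n k) else 0)"
    "tab1 n k (n + 2) m = (if k = m then of_int (weight_y1 n k) else 0)"
  using assms by (auto simp: tab1_def vzero_def ev_def smul_def weight_x1_def weight_y1_def)

lemma tab1_torus:
  assumes "n > 5" "k \<in> idxR n"
  shows "antisym_tab (tab1 n) (n + 1) k m = (if k = m then - of_int (weight_x1 n k) else 0)"
    and "antisym_tab (tab1 n) (n + 2) k m = (if k = m then - of_int (weight_y1 n k) else 0)"
  using assms tab1_torus_entries[OF assms(1)] by (auto simp: antisym_tab_def vsub_def idxR_def)

lemma tab1_values:
  assumes "n > 5"
  shows "2 \<le> k \<Longrightarrow> k \<le> n - 2 \<Longrightarrow> antisym_tab (tab1 n) 1 k (k + 1) = 1"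
    and "2 \<le> k \<Longrightarrow> k \<le> (n - 1) div 2 \<Longrightarrow> antisym_tab (tab1 n) k (n - k) n = (-1) ^ k"
  using assms by (auto simp: antisym_tab_def vsub_def tab1_def ev_def smul_def vzero_def)

lemma R1_additive_diag:
  fixes D :: "nat \<Rightarrow> complex"
  assumes n: "n > 5"
    and additive: "\<And>i j m. i \<in> idxR n - {n + 1, n + 2} \<Longrightarrow> j \<in> idxR n - {n + 1, n + 2} \<Longrightarrow>
      m \<in> idxR n - {n + 1, n + 2} \<Longrightarrow> antisym_tab (tab1 n) i j m \<noteq> 0 \<Longrightarrow> D i + D j = D m"
    and a: "a \<in> idxR n - {n + 1, n + 2}"
  shows "D a = of_int (weight_x1 n a) * D 1 + of_int (weight_y1 n a) * D 2"
proof -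
  have step: "D (Suc k) = D k + D 1" if "2 \<le> k" "k < n - 1" for k
  proof -
    have "antisym_tab (tab1 n) 1 k (k + 1) \<noteq> 0" using tab1_values(1)[OF n] that by simp
    moreover have "1 \<in> idxR n - {n + 1, n + 2}" "k \<in> idxR n - {n + 1, n + 2}"
      "k + 1 \<in> idxR n - {n + 1, n + 2}" using that n by (auto simp: idxR_def)
    ultimately have "D 1 + D k = D (k + 1)" using additive by blast
    thus ?thesis by (simp add: add.commute)
  qed
  have middle: "D k = D 2 + of_nat (k - 2) * D 1" if "2 \<le> k" "k \<le> n - 1" for k
    using linear_recurrence[of 2 "n - 1" D "D 1", OF step] that by blast
  have "antisym_tab (tab1 n) 2 (n - 2) n \<noteq> 0" using tab1_values(2)[OF n, of 2] n by simp
  moreover have "2 \<in> idxR n - {n + 1, n + 2}" "n - 2 \<in> idxR n - {n + 1, n + 2}"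
    "n \<in> idxR n - {n + 1, n + 2}" using n by (auto simp: idxR_def)
  ultimately have "D 2 + D (n - 2) = D n" using additive by blast
  hence "D n = of_int (int n - 4) * D 1 + 2 * D 2"
    using middle[of "n - 2"] n by (simp add: of_nat_diff algebra_simps)
  moreover have "a = 1 \<or> 2 \<le> a \<and> a \<le> n - 1 \<or> a = n" using a by (auto simp: idxR_def)
  ultimately show ?thesis
    using middle[of a] n by (auto simp: weight_x1_def weight_y1_def of_nat_diff)
qed

lemma toral_table_R1:
  assumes n: "n > 5"
  shows "toral_table (idxR n) (antisym_tab (tab1 n)) (weight_x1 n) (weight_y1 n) (n + 1) (n + 2) 1 2"
proof
  show "antisym_tab (tab1 n) j i m = - antisym_tab (tab1 n) i j m" for i j m
    by (simp add: antisym_tab_def vsub_def)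
  show "antisym_tab (tab1 n) i j m = 0" if "m \<notin> idxR n" for i j m
    using that tab1_weight[OF n, of i j m] tab1_weight[OF n, of j i m]
    by (cases "tab1 n i j m = 0"; cases "tab1 n j i m = 0") (auto simp: antisym_tab_def vsub_def idxR_def)
  show "weight_x1 n i + weight_x1 n j = weight_x1 n m \<and> weight_y1 n i + weight_y1 n j = weight_y1 n m"
    if "antisym_tab (tab1 n) i j m \<noteq> 0" for i j m
    using that tab1_weight[OF n, of i j m] tab1_weight[OF n, of j i m]
    by (cases "tab1 n i j m = 0"; cases "tab1 n j i m = 0") (auto simp: antisym_tab_def vsub_def)
  show "a = k \<or> a \<in> {n + 1, n + 2} \<and> k \<in> {n + 1, n + 2}"
    if "a \<in> idxR n" "k \<in> idxR n" "weight_x1 n a = weight_x1 n k" "weight_y1 n a = weight_y1 n k" for a k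
    using that n by (auto simp: weight_x1_def weight_y1_def idxR_def split: if_splits)
  show "0 \<le> weight_x1 n a \<and> 0 \<le> weight_y1 n a" for a
    using n by (simp add: weight_x1_def weight_y1_def)
  show "weight_x1 n 1 = 1" "weight_y1 n 1 = 0" "weight_x1 n 2 = 0" "weight_y1 n 2 = 1"
    using n by (auto simp: weight_x1_def weight_y1_def)
qed (use n tab1_torus[OF n] R1_additive_diag[OF n] in \<open>auto simp: idxR_def\<close>)

context
  fixes n h :: nat
  assumes n: "n > 5" and h: "n = 2 * h + 1"
begin

interpretation R1: toral_table "idxR n" "antisym_tab (tab1 n)" "weight_x1 n" "weight_y1 n" "n + 1" "n + 2" 1 2
  by (rule toral_table_R1[OF n])

lemma R1_balanced_cases:
  assumes "i \<in> idxR n - {n + 1, n + 2}" "j \<in> idxR n - {n + 1, n + 2}" "m \<in> idxR n" "i < j"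
    "R1.balanced i j m"
  shows "i = 1 \<and> 2 \<le> j \<and> j \<le> n - 2 \<and> m = j + 1 \<or> 2 \<le> i \<and> i \<le> h \<and> j = n - i \<and> m = n"
  using assms n unfolding R1.balanced_def
  using h by (auto simp: weight_x1_def weight_y1_def idxR_def split: if_splits)

lemma R1_cocycle_relation:
  assumes P: "R1.cocycle P" and k: "2 \<le> k" "k + 1 \<le> h"
  shows "(-1) ^ k * P 1 k (k + 1) - (-1) ^ k * P 1 (n - k - 1) (n - k)
    - P (k + 1) (n - k - 1) n - P k (n - k) n = 0"
proof -
  let ?I = "idxR n" and ?C = "antisym_tab (tab1 n)"
  have I: "1 \<in> ?I" "k \<in> ?I" "n \<in> ?I" "k + 1 \<in> ?I" "n - k - 1 \<in> ?I" "n - k \<in> ?I"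
    using n k h by (auto simp: idxR_def)
  have hd: "(n - 1) div 2 = h" using h by simp
  have v2: "?C k (n - k) n = (-1) ^ k" using tab1_values(2)[OF n, of k] k hd by simp
  have v3: "?C (n - k - 1) (k + 1) n = (-1) ^ k"
    using tab1_values(2)[OF n, of "k + 1"] R1.C_antisym[of "n - k - 1" "k + 1" n] k hd
    by (simp add: diff_diff_add)
  have v4: "?C 1 k (k + 1) = 1" using tab1_values(1)[OF n, of k] k h by simp
  have v5: "?C 1 (n - k - 1) (n - k) = 1"
  proof -
    have "n - k - 1 + 1 = n - k" "2 \<le> n - k - 1" "n - k - 1 \<le> n - 2" using k h by auto
    thus ?thesis using tab1_values(1)[OF n, of "n - k - 1"] by simp
  qed
  have kn: "2 * k + 3 \<le> n" using k h by simp
  note weights = R1.balanced_def weight_x1_def weight_y1_def idxR_def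
  have "(\<Sum>j\<in>?I. P k (n - k - 1) j * ?C 1 j n) = 0"
    using I k n kn by (intro R1.sum_bracket_none) (auto simp: weights split: if_splits)
  moreover have "(\<Sum>j\<in>?I. P 1 (n - k - 1) j * ?C k j n) = (-1) ^ k * P 1 (n - k - 1) (n - k)"
    using I k n kn v2 by (subst R1.sum_bracket_single[of k n "n - k"]) (auto simp: weights split: if_splits)
  moreover have "(\<Sum>j\<in>?I. P 1 k j * ?C (n - k - 1) j n) = (-1) ^ k * P 1 k (k + 1)"
    using I k n kn v3
    by (subst R1.sum_bracket_single[of "n - k - 1" n "k + 1"]) (auto simp: weights split: if_splits)
  moreover have "(\<Sum>j\<in>?I. ?C 1 k j * P j (n - k - 1) n) = P (k + 1) (n - k - 1) n"
    using I k n kn v4 by (subst R1.sum_image_single[of 1 k "k + 1"]) (auto simp: weights split: if_splits)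
  moreover have "(\<Sum>j\<in>?I. ?C 1 (n - k - 1) j * P j k n) = - P k (n - k) n"
    using I k n kn v5 R1.cocycle_antisym[OF P, of "n - k" k n]
    by (subst R1.sum_image_single[of 1 "n - k - 1" "n - k"]) (auto simp: weights split: if_splits)
  moreover have "(\<Sum>j\<in>?I. ?C k (n - k - 1) j * P j 1 n) = 0"
    using I k n kn by (intro R1.sum_image_none) (auto simp: weights split: if_splits)
  moreover have "d2_coeff ?I ?C P 1 k (n - k - 1) n = 0"
    using R1.cocycle_d2_coeff[OF P] I by blast
  ultimately show ?thesis unfolding d2_coeff_def by (simp add: algebra_simps)
qed

lemma R1_pairs_match:
  assumes P: "R1.cocycle P"
    and D_step: "\<And>k. 2 \<le> k \<Longrightarrow> k \<le> n - 2 \<Longrightarrow> P 1 k (k + 1) = D k - D (k + 1)"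
    and D_2: "D 2 = 0" and D_n: "D n = D (n - 2) - P 2 (n - 2) n"
    and k: "2 \<le> k" "k \<le> h"
  shows "P k (n - k) n = (-1) ^ k * (D k + D (n - k) - D n)"
  using k
proof (induction k rule: nat_induct_at_least)
  case base
  thus ?case using D_2 D_n by simp
next
  case (Suc k)
  have index: "n - Suc k = n - k - 1" "n - k - 1 + 1 = n - k" "2 \<le> n - k - 1" "n - k - 1 \<le> n - 2"
    using Suc h by auto
  have "P 1 k (k + 1) = D k - D (k + 1)" using D_step Suc h by simp
  moreover have "P 1 (n - k - 1) (n - k) = D (n - k - 1) - D (n - k)"
    using D_step[of "n - k - 1"] index(2-4) by simp
  moreover have "P k (n - k) n = (-1) ^ k * (D k + D (n - k) - D n)" using Suc by simp
  moreover have "P (k + 1) (n - k - 1) n =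
      (-1) ^ k * (P 1 k (k + 1) - P 1 (n - k - 1) (n - k)) - P k (n - k) n"
    using R1_cocycle_relation[OF P Suc.hyps(1)] Suc.prems by (simp add: algebra_simps)
  ultimately have "P (k + 1) (n - k - 1) n =
      (-1) ^ k * ((D k - D (k + 1)) - (D (n - k - 1) - D (n - k))) - (-1) ^ k * (D k + D (n - k) - D n)"
    by simp
  also have "\<dots> = (-1) ^ (k + 1) * (D (k + 1) + D (n - k - 1) - D n)"
    by (simp add: algebra_simps)
  finally show ?case by (simp add: diff_diff_add)
qed

text \<open>\<open>D\<close> is forced on \<open>e\<^sub>2, \<dots>, e\<^sub>n\<^sub>-\<^sub>1\<close> by the brackets with \<open>e\<^sub>1\<close> (normalising
  \<open>D 1 = D 2 = 0\<close>); \<open>D n\<close> absorbs \<open>P 2 (n - 2) n\<close>, and the relation above then propagates the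
  match along the pairs \<open>[e\<^sub>k, e\<^sub>n\<^sub>-\<^sub>k] = \<plusminus>e\<^sub>n\<close>.\<close>

lemma R1_nilradical_match:
  assumes P: "R1.cocycle P"
  shows "\<exists>D. \<forall>i\<in>idxR n - {n + 1, n + 2}. \<forall>j\<in>idxR n - {n + 1, n + 2}. \<forall>m\<in>idxR n. i < j \<longrightarrow>
    R1.balanced i j m \<longrightarrow> P i j m = antisym_tab (tab1 n) i j m * (D i + D j - D m)"
proof -
  define D where "D a = (if a \<le> n - 1 then - (\<Sum>k\<in>{2..<a}. P 1 k (k + 1))
    else - (\<Sum>k\<in>{2..<n - 2}. P 1 k (k + 1)) - P 2 (n - 2) n)" for a
  have D_step: "P 1 k (k + 1) = D k - D (k + 1)" if "2 \<le> k" "k \<le> n - 2" for k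
  proof -
    have "k \<le> n - 1" "k + 1 \<le> n - 1" using that n by auto
    thus ?thesis using that by (simp add: D_def sum.atLeastLessThan_Suc)
  qed
  have D_low: "D 1 = 0" "D 2 = 0" using n by (auto simp: D_def)
  have D_top: "D n = D (n - 2) - P 2 (n - 2) n" using n by (auto simp: D_def)
  show ?thesis
  proof (intro exI ballI impI)
    fix i j m
    assume "i \<in> idxR n - {n + 1, n + 2}" "j \<in> idxR n - {n + 1, n + 2}" "m \<in> idxR n" "i < j"
      "R1.balanced i j m"
    from R1_balanced_cases[OF this]
    show "P i j m = antisym_tab (tab1 n) i j m * (D i + D j - D m)"
    proof (elim disjE conjE)
      assume "i = 1" "2 \<le> j" "j \<le> n - 2" "m = j + 1"
      thus ?thesis using D_step[of j] D_low tab1_values(1)[OF n] by simp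
    next
      assume "2 \<le> i" "i \<le> h" "j = n - i" "m = n"
      moreover have "(n - 1) div 2 = h" using h by simp
      ultimately show ?thesis
        using R1_pairs_match[OF P D_step D_low(2) D_top] tab1_values(2)[OF n, of i] by simp
    qed
  qed
qed

end

section \<open>The algebra \<open>R(g^2_(n,1), 2)\<close>\<close>

definition weight_x2 :: "nat \<Rightarrow> nat \<Rightarrow> int" where
  "weight_x2 n i = (if i = 1 then 1 else if 2 \<le> i \<and> i \<le> n - 1 then int i - 2 else if i = n then 2 else 0)"

definition weight_y2 :: "nat \<Rightarrow> nat \<Rightarrow> int" where
  "weight_y2 n i = (if 2 \<le> i \<and> i \<le> n - 1 then 1 else 0)"

lemma tab2_weight:
  "n > 5 \<Longrightarrow> tab2 n i j m \<noteq> 0 \<Longrightarrow> 1 \<le> m \<and> m \<le> n + 2 \<and>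
    weight_x2 n i + weight_x2 n j = weight_x2 n m \<and> weight_y2 n i + weight_y2 n j = weight_y2 n m"
  by (auto simp: tab2_def ev_def smul_def vzero_def weight_x2_def weight_y2_def split: if_splits)

lemma tab2_torus:
  assumes "n > 5" "k \<in> idxR n"
  shows "antisym_tab (tab2 n) (n + 1) k m = (if k = m then - of_int (weight_x2 n k) else 0)"
    and "antisym_tab (tab2 n) (n + 2) k m = (if k = m then - of_int (weight_y2 n k) else 0)"
  using assms by (auto simp: antisym_tab_def vsub_def tab2_def ev_def smul_def vzero_def
      weight_x2_def weight_y2_def idxR_def)

lemma tab2_values:
  assumes "n > 5"
  shows "2 \<le> k \<Longrightarrow> k \<le> n - 2 \<Longrightarrow> antisym_tab (tab2 n) 1 k (k + 1) = 1"
    and "2 \<le> k \<Longrightarrow> k \<le> n - 3 \<Longrightarrow> antisym_tab (tab2 n) k n (k + 2) = 1"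
  using assms by (auto simp: antisym_tab_def vsub_def tab2_def ev_def vzero_def)

lemma R2_additive_diag:
  fixes D :: "nat \<Rightarrow> complex"
  assumes n: "n > 5"
    and additive: "\<And>i j m. i \<in> idxR n - {n + 1, n + 2} \<Longrightarrow> j \<in> idxR n - {n + 1, n + 2} \<Longrightarrow>
      m \<in> idxR n - {n + 1, n + 2} \<Longrightarrow> antisym_tab (tab2 n) i j m \<noteq> 0 \<Longrightarrow> D i + D j = D m"
    and a: "a \<in> idxR n - {n + 1, n + 2}"
  shows "D a = of_int (weight_x2 n a) * D 1 + of_int (weight_y2 n a) * D 2"
proof -
  have step: "D (Suc k) = D k + D 1" if "2 \<le> k" "k < n - 1" for k
  proof -
    have "antisym_tab (tab2 n) 1 k (k + 1) \<noteq> 0" using tab2_values(1)[OF n] that by simp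
    moreover have "1 \<in> idxR n - {n + 1, n + 2}" "k \<in> idxR n - {n + 1, n + 2}"
      "k + 1 \<in> idxR n - {n + 1, n + 2}" using that n by (auto simp: idxR_def)
    ultimately have "D 1 + D k = D (k + 1)" using additive by blast
    thus ?thesis by (simp add: add.commute)
  qed
  have middle: "D k = D 2 + of_nat (k - 2) * D 1" if "2 \<le> k" "k \<le> n - 1" for k
    using linear_recurrence[of 2 "n - 1" D "D 1", OF step] that by blast
  have "antisym_tab (tab2 n) 2 n 4 \<noteq> 0" using tab2_values(2)[OF n, of 2] n by simp
  moreover have "2 \<in> idxR n - {n + 1, n + 2}" "n \<in> idxR n - {n + 1, n + 2}"
    "4 \<in> idxR n - {n + 1, n + 2}" using n by (auto simp: idxR_def)
  ultimately have "D 2 + D n = D 4" using additive by blast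
  hence "D n = 2 * D 1" using middle[of 4] n by simp
  moreover have "a = 1 \<or> 2 \<le> a \<and> a \<le> n - 1 \<or> a = n" using a by (auto simp: idxR_def)
  ultimately show ?thesis
    using middle[of a] n by (auto simp: weight_x2_def weight_y2_def of_nat_diff)
qed

lemma toral_table_R2:
  assumes n: "n > 5"
  shows "toral_table (idxR n) (antisym_tab (tab2 n)) (weight_x2 n) (weight_y2 n) (n + 1) (n + 2) 1 2"
proof
  show "antisym_tab (tab2 n) j i m = - antisym_tab (tab2 n) i j m" for i j m
    by (simp add: antisym_tab_def vsub_def)
  show "antisym_tab (tab2 n) i j m = 0" if "m \<notin> idxR n" for i j m
    using that tab2_weight[OF n, of i j m] tab2_weight[OF n, of j i m]
    by (cases "tab2 n i j m = 0"; cases "tab2 n j i m = 0") (auto simp: antisym_tab_def vsub_def idxR_def)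
  show "weight_x2 n i + weight_x2 n j = weight_x2 n m \<and> weight_y2 n i + weight_y2 n j = weight_y2 n m"
    if "antisym_tab (tab2 n) i j m \<noteq> 0" for i j m
    using that tab2_weight[OF n, of i j m] tab2_weight[OF n, of j i m]
    by (cases "tab2 n i j m = 0"; cases "tab2 n j i m = 0") (auto simp: antisym_tab_def vsub_def)
  show "a = k \<or> a \<in> {n + 1, n + 2} \<and> k \<in> {n + 1, n + 2}"
    if "a \<in> idxR n" "k \<in> idxR n" "weight_x2 n a = weight_x2 n k" "weight_y2 n a = weight_y2 n k" for a k
    using that by (auto simp: weight_x2_def weight_y2_def idxR_def split: if_splits)
  show "0 \<le> weight_x2 n a \<and> 0 \<le> weight_y2 n a" for a
    by (simp add: weight_x2_def weight_y2_def)
  show "weight_x2 n 1 = 1" "weight_y2 n 1 = 0" "weight_x2 n 2 = 0" "weight_y2 n 2 = 1"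
    using n by (auto simp: weight_x2_def weight_y2_def)
qed (use n tab2_torus[OF n] R2_additive_diag[OF n] in \<open>auto simp: idxR_def\<close>)

context
  fixes n :: nat
  assumes n: "n > 5"
begin

interpretation R2: toral_table "idxR n" "antisym_tab (tab2 n)" "weight_x2 n" "weight_y2 n" "n + 1" "n + 2" 1 2
  by (rule toral_table_R2[OF n])

lemma R2_balanced_cases:
  assumes "i \<in> idxR n - {n + 1, n + 2}" "j \<in> idxR n - {n + 1, n + 2}" "m \<in> idxR n" "i < j"
    "R2.balanced i j m"
  shows "i = 1 \<and> 2 \<le> j \<and> j \<le> n - 2 \<and> m = j + 1 \<or> j = n \<and> 2 \<le> i \<and> i \<le> n - 3 \<and> m = i + 2"
  using assms n by (auto simp: R2.balanced_def weight_x2_def weight_y2_def idxR_def split: if_splits)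

lemma R2_cocycle_relation:
  assumes P: "R2.cocycle P" and k: "2 \<le> k" "k \<le> n - 4"
  shows "P k n (k + 2) - P 1 k (k + 1) - P (k + 1) n (k + 3) + P 1 (k + 2) (k + 3) = 0"
proof -
  let ?I = "idxR n" and ?C = "antisym_tab (tab2 n)"
  have I: "1 \<in> ?I" "k \<in> ?I" "n \<in> ?I" "k + 1 \<in> ?I" "k + 2 \<in> ?I" "k + 3 \<in> ?I"
    using n k by (auto simp: idxR_def)
  note weights = R2.balanced_def weight_x2_def weight_y2_def idxR_def
  have "(\<Sum>j\<in>?I. P k n j * ?C 1 j (k + 3)) = P k n (k + 2)"
    using I k n tab2_values(1)[OF n, of "k + 2"]
    by (subst R2.sum_bracket_single[of 1 "k + 3" "k + 2"])
      (auto simp: weights numeral_3_eq_3 split: if_splits)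
  moreover have "(\<Sum>j\<in>?I. P 1 n j * ?C k j (k + 3)) = 0"
    using I k n by (intro R2.sum_bracket_none) (auto simp: weights split: if_splits)
  moreover have "(\<Sum>j\<in>?I. P 1 k j * ?C n j (k + 3)) = - P 1 k (k + 1)"
    using I k n tab2_values(2)[OF n, of "k + 1"] R2.C_antisym[of n "k + 1" "k + 3"]
    by (subst R2.sum_bracket_single[of n "k + 3" "k + 1"])
      (auto simp: weights numeral_3_eq_3 split: if_splits)
  moreover have "(\<Sum>j\<in>?I. ?C 1 k j * P j n (k + 3)) = P (k + 1) n (k + 3)"
    using I k n tab2_values(1)[OF n, of k]
    by (subst R2.sum_image_single[of 1 k "k + 1"]) (auto simp: weights split: if_splits)
  moreover have "(\<Sum>j\<in>?I. ?C 1 n j * P j k (k + 3)) = 0"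
    using I k n by (intro R2.sum_image_none) (auto simp: weights split: if_splits)
  moreover have "(\<Sum>j\<in>?I. ?C k n j * P j 1 (k + 3)) = - P 1 (k + 2) (k + 3)"
    using I k n tab2_values(2)[OF n, of k] R2.cocycle_antisym[OF P, of "k + 2" 1 "k + 3"]
    by (subst R2.sum_image_single[of k n "k + 2"]) (auto simp: weights split: if_splits)
  moreover have "d2_coeff ?I ?C P 1 k n (k + 3) = 0"
    using R2.cocycle_d2_coeff[OF P] I by blast
  ultimately show ?thesis unfolding d2_coeff_def by (simp add: algebra_simps)
qed

lemma R2_top_match:
  assumes P: "R2.cocycle P"
    and D_step: "\<And>k. 2 \<le> k \<Longrightarrow> k \<le> n - 2 \<Longrightarrow> P 1 k (k + 1) = D k - D (k + 1)"
    and D_2: "D 2 = 0" and D_n: "D n = P 2 n 4 + D 4"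
    and k: "2 \<le> k" "k \<le> n - 3"
  shows "P k n (k + 2) = D k + D n - D (k + 2)"
  using k
proof (induction k rule: nat_induct_at_least)
  case base
  thus ?case using D_2 D_n by simp
next
  case (Suc k)
  have "k \<le> n - 2" "k + 2 \<le> n - 2" using Suc by auto
  hence "P 1 k (k + 1) = D k - D (k + 1)" "P 1 (k + 2) (k + 3) = D (k + 2) - D (k + 3)"
    using D_step[of k] D_step[of "k + 2"] \<open>2 \<le> k\<close> by (simp_all add: numeral_3_eq_3)
  moreover have "P k n (k + 2) = D k + D n - D (k + 2)" using Suc by simp
  moreover have "P (k + 1) n (k + 3) = P k n (k + 2) - P 1 k (k + 1) + P 1 (k + 2) (k + 3)"
    using R2_cocycle_relation[OF P, of k] Suc by (simp add: algebra_simps)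
  ultimately show ?case by (simp add: numeral_3_eq_3)
qed

text \<open>As for \<open>R(g^1_(n,1), 2)\<close>, now with \<open>D n\<close> absorbing \<open>P 2 n 4\<close> and the match propagated
  along the brackets \<open>[e\<^sub>k, e\<^sub>n] = e\<^sub>k\<^sub>+\<^sub>2\<close>.\<close>

lemma R2_nilradical_match:
  assumes P: "R2.cocycle P"
  shows "\<exists>D. \<forall>i\<in>idxR n - {n + 1, n + 2}. \<forall>j\<in>idxR n - {n + 1, n + 2}. \<forall>m\<in>idxR n. i < j \<longrightarrow>
    R2.balanced i j m \<longrightarrow> P i j m = antisym_tab (tab2 n) i j m * (D i + D j - D m)"
proof -
  define D where "D a = (if a \<le> n - 1 then - (\<Sum>k\<in>{2..<a}. P 1 k (k + 1))
    else P 2 n 4 - P 1 2 3 - P 1 3 4)" for a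
  have D_step: "P 1 k (k + 1) = D k - D (k + 1)" if "2 \<le> k" "k \<le> n - 2" for k
  proof -
    have "k \<le> n - 1" "k + 1 \<le> n - 1" using that n by auto
    thus ?thesis using that by (simp add: D_def sum.atLeastLessThan_Suc)
  qed
  have D_low: "D 1 = 0" "D 2 = 0" using n by (auto simp: D_def)
  have D_top: "D n = P 2 n 4 + D 4" using n by (auto simp: D_def numeral_eq_Suc)
  show ?thesis
  proof (intro exI ballI impI)
    fix i j m
    assume "i \<in> idxR n - {n + 1, n + 2}" "j \<in> idxR n - {n + 1, n + 2}" "m \<in> idxR n" "i < j"
      "R2.balanced i j m"
    from R2_balanced_cases[OF this]
    show "P i j m = antisym_tab (tab2 n) i j m * (D i + D j - D m)"
    proof (elim disjE conjE)
      assume "i = 1" "2 \<le> j" "j \<le> n - 2" "m = j + 1"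
      thus ?thesis using D_step[of j] D_low tab2_values(1)[OF n] by simp
    next
      assume "j = n" "2 \<le> i" "i \<le> n - 3" "m = i + 2"
      thus ?thesis using R2_top_match[OF P D_step D_low(2) D_top] tab2_values(2)[OF n] by simp
    qed
  qed
qed

end

theorem theorem3p8:
  fixes n :: nat
  assumes "n > 5"
  shows "(odd n \<longrightarrow> H2_adj_zero (idxR n) (brR1 n)) \<and> H2_adj_zero (idxR n) (brR2 n)"
proof
  show "odd n \<longrightarrow> H2_adj_zero (idxR n) (brR1 n)"
  proof
    assume "odd n"
    then obtain h where "n = 2 * h + 1" using oddE by blast
    thus "H2_adj_zero (idxR n) (brR1 n)"
      unfolding brR1_def
      using toral_table.H2_adj_zero_if_nilradical_match[OF toral_table_R1[OF assms]]
        R1_nilradical_match[OF assms]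
      by blast
  qed
  show "H2_adj_zero (idxR n) (brR2 n)"
    unfolding brR2_def
    by (rule toral_table.H2_adj_zero_if_nilradical_match[OF toral_table_R2[OF assms]
          R2_nilradical_match[OF assms]])
qed

end
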